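(* Let $F$ be a $3$-graph such that for every vertex $v\in V(F)$ there exists a vertex $u\in V(F)\setminus\{v\}$ with $N_F(v)\cap N_F(u)\neq\emptyset$. Then for every $p\in(0,1)$ and every $\mu>0$ there exist $n_0\in\mathbb{N}$ and $\alpha>0$ such that for every $n\ge n_0$ there exists an $(n,p,\mu,\cdot)$ $3$-graph $H$ with $\delta_1(H)\ge \alpha n^2$ that has no $F$-factor.
   Context: A $k$-graph $H=(V(H),E(H))$ has edge set $E(H)\subseteq\binom{V(H)}{k}$. For $S\subseteq V(H)$ with $1\le |S|\le k-1$, $N_H(S)=\{S'\in\binom{V(H)}{k-|S|}: S\cup S'\in E(H)\}$ and $\deg_H(S)=|N_H(S)|$; for a vertex $v$, $N_H(v)=N_H(\{v\})$ (so in a $3$-graph $N_H(v)$ is a set of pairs). $\delta_s(H)$ is the minimum of $\deg_H(S)$ over all $s$-subsets $S$ of $V(H)$. An $F$-factor in $H$ is a set of vertex-disjoint copies of $F$ in $H$ covering $V(H)$. An $(n,p,\mu,\cdot)$ $k$-graph is a $k$-graph $H$ on a vertex set $V$ with $|V|=n$ such that for all $X_1,\dots,X_k\subseteq V$, the number of $k$-tuples $(x_1,\dots,x_k)\in X_1\times\cdots\times X_k$ with $\{x_1,\dots,x_k\}\in E(H)$ is at least $p|X_1|\cdots|X_k|-\mu n^k$. *)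

theory Defs
  imports Complex_Main "HOL-Library.FuncSet"
begin

definition kgraph :: "nat \<Rightarrow> 'a set \<Rightarrow> 'a set set \<Rightarrow> bool" where
  "kgraph k V E \<longleftrightarrow> finite V \<and> (\<forall>e\<in>E. e \<subseteq> V \<and> card e = k)"

definition nbhd :: "nat \<Rightarrow> 'a set \<Rightarrow> 'a set set \<Rightarrow> 'a set \<Rightarrow> 'a set set" where
  "nbhd k V E S = {S'. S' \<subseteq> V \<and> card S' = k - card S \<and> S \<union> S' \<in> E}"

definition deg :: "nat \<Rightarrow> 'a set \<Rightarrow> 'a set set \<Rightarrow> 'a set \<Rightarrow> nat" where
  "deg k V E S = card (nbhd k V E S)"

definition min_deg :: "nat \<Rightarrow> nat \<Rightarrow> 'a set \<Rightarrow> 'a set set \<Rightarrow> nat" where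
  "min_deg k s V E = Min ((\<lambda>S. deg k V E S) ` {S. S \<subseteq> V \<and> card S = s})"

definition embedding :: "'a set \<Rightarrow> 'a set set \<Rightarrow> 'b set \<Rightarrow> 'b set set \<Rightarrow> ('a \<Rightarrow> 'b) \<Rightarrow> bool" where
  "embedding VF EF VH EH \<phi> \<longleftrightarrow> \<phi> \<in> VF \<rightarrow> VH \<and> inj_on \<phi> VF \<and> (\<forall>e\<in>EF. \<phi> ` e \<in> EH)"

definition has_factor :: "'a set \<Rightarrow> 'a set set \<Rightarrow> 'b set \<Rightarrow> 'b set set \<Rightarrow> bool" where
  "has_factor VF EF VH EH \<longleftrightarrow>
     (\<exists>\<C>. (\<forall>\<phi>\<in>\<C>. embedding VF EF VH EH \<phi>) \<and>
          (\<forall>\<phi>\<in>\<C>. \<forall>\<psi>\<in>\<C>. \<phi> ` VF \<inter> \<psi> ` VF \<noteq> {} \<longrightarrow> \<phi> ` VF = \<psi> ` VF) \<and>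
          (\<Union>\<phi>\<in>\<C>. \<phi> ` VF) = VH)"

definition pmu3 :: "nat \<Rightarrow> real \<Rightarrow> real \<Rightarrow> 'a set \<Rightarrow> 'a set set \<Rightarrow> bool" where
  "pmu3 n p \<mu> V E \<longleftrightarrow> kgraph 3 V E \<and> card V = n \<and>
     (\<forall>X1 X2 X3. X1 \<subseteq> V \<longrightarrow> X2 \<subseteq> V \<longrightarrow> X3 \<subseteq> V \<longrightarrow>
        real (card {(x1, x2, x3). x1 \<in> X1 \<and> x2 \<in> X2 \<and> x3 \<in> X3 \<and> {x1, x2, x3} \<in> E})
          \<ge> p * real (card X1) * real (card X2) * real (card X3) - \<mu> * real n ^ 3)"

end

theory Submission
  imports Defs
begin

(* Let vertex 0 be a hub whose edges are exactly the triples {0, y, z} with y, z in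
   S = {1..2t}, and let the remaining edges be all triples avoiding 0 that meet S at most once.
   In a copy of F covering the hub, the preimage v of 0 has a partner u sharing a link pair
   {x, y}; then x and y are mapped into S, so the image of the edge {u, x, y} avoids the hub
   but meets S twice, which is impossible. Hence there is no F-factor. Only O(n^2 + t^2 n)
   triples of vertices are non-edges, so for t = n div K with K large the graph is
   (n, p, mu)-dense for every p <= 1, while every vertex still has degree at least t^2. *)

lemma kgraph3_common_link_pair:
  assumes "kgraph 3 VF EF" and "nbhd 3 VF EF {v} \<inter> nbhd 3 VF EF {u} \<noteq> {}"
  obtains x y where "x \<in> VF" "y \<in> VF" "x \<noteq> y" "v \<notin> {x, y}" "u \<notin> {x, y}"
    "{v, x, y} \<in> EF" "{u, x, y} \<in> EF"
proof -
  obtain S where Sv: "S \<in> nbhd 3 VF EF {v}" and Su: "S \<in> nbhd 3 VF EF {u}"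
    using assms(2) by blast
  then obtain x y where S: "S = {x, y}" "x \<noteq> y" "S \<subseteq> VF"
    by (auto simp: nbhd_def card_2_iff)
  have edges: "{v, x, y} \<in> EF" "{u, x, y} \<in> EF"
    using Sv Su S by (auto simp: nbhd_def)
  then have "card {v, x, y} = 3" "card {u, x, y} = 3"
    using assms(1) by (auto simp: kgraph_def)
  then have "v \<notin> {x, y}" "u \<notin> {x, y}"
    using S(2) by (auto simp: insert_absorb)
  with S edges show thesis by (intro that) auto
qed

lemma not_has_factor_if_uncovered:
  assumes "w \<in> VH" and "\<And>\<phi>. embedding VF EF VH EH \<phi> \<Longrightarrow> w \<notin> \<phi> ` VF"
  shows "\<not> has_factor VF EF VH EH"
  using assms unfolding has_factor_def by blast

lemma embedding_avoids_hub:
  assumes F: "kgraph 3 VF EF"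
    and links: "\<forall>v\<in>VF. \<exists>u\<in>VF - {v}. nbhd 3 VF EF {v} \<inter> nbhd 3 VF EF {u} \<noteq> {}"
    and hub: "\<forall>e\<in>EH. w \<in> e \<longrightarrow> e \<subseteq> insert w S"
    and sparse: "\<forall>e\<in>EH. w \<notin> e \<longrightarrow> (\<forall>y\<in>e \<inter> S. \<forall>z\<in>e \<inter> S. y = z)"
    and \<phi>: "embedding VF EF VH EH \<phi>"
  shows "w \<notin> \<phi> ` VF"
proof
  assume "w \<in> \<phi> ` VF"
  then obtain v where v: "v \<in> VF" "\<phi> v = w" by blast
  with links obtain u where u: "u \<in> VF" "u \<noteq> v"
    and common: "nbhd 3 VF EF {v} \<inter> nbhd 3 VF EF {u} \<noteq> {}" by blast
  from F common obtain x y where xy: "x \<in> VF" "y \<in> VF" "x \<noteq> y" "v \<notin> {x, y}" "u \<notin> {x, y}"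
    and edges: "{v, x, y} \<in> EF" "{u, x, y} \<in> EF"
    by (rule kgraph3_common_link_pair)
  have inj: "inj_on \<phi> VF" and "\<forall>e\<in>EF. \<phi> ` e \<in> EH"
    using \<phi> by (auto simp: embedding_def)
  then have "\<phi> ` {v, x, y} \<in> EH" "\<phi> ` {u, x, y} \<in> EH"
    using edges by blast+
  then have hub_edge: "{w, \<phi> x, \<phi> y} \<in> EH" and far_edge: "{\<phi> u, \<phi> x, \<phi> y} \<in> EH"
    using v(2) by simp_all
  have ne: "\<phi> x \<noteq> w" "\<phi> y \<noteq> w" "\<phi> u \<noteq> w" "\<phi> x \<noteq> \<phi> y"
    using inj_on_eq_iff[OF inj] xy u v by auto
  have "w \<in> {w, \<phi> x, \<phi> y} \<longrightarrow> {w, \<phi> x, \<phi> y} \<subseteq> insert w S"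
    using hub hub_edge by (rule bspec)
  then have in_S: "\<phi> x \<in> S" "\<phi> y \<in> S"
    using ne by auto
  have "w \<notin> {\<phi> u, \<phi> x, \<phi> y}"
    using ne by auto
  moreover have "w \<notin> {\<phi> u, \<phi> x, \<phi> y} \<longrightarrow>
      (\<forall>a\<in>{\<phi> u, \<phi> x, \<phi> y} \<inter> S. \<forall>b\<in>{\<phi> u, \<phi> x, \<phi> y} \<inter> S. a = b)"
    using sparse far_edge by (rule bspec)
  moreover have "\<phi> x \<in> {\<phi> u, \<phi> x, \<phi> y} \<inter> S" "\<phi> y \<in> {\<phi> u, \<phi> x, \<phi> y} \<inter> S"
    using in_S by simp_all
  ultimately show False
    using ne(4) by blast
qed

lemma card_mult_le_deg:
  assumes "finite V" "A \<inter> B = {}" "A \<subseteq> V" "B \<subseteq> V"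
    and "\<And>y z. y \<in> A \<Longrightarrow> z \<in> B \<Longrightarrow> {x, y, z} \<in> E"
  shows "card A * card B \<le> deg 3 V E {x}"
proof -
  let ?pair = "\<lambda>(y, z). {y, z}"
  have "inj_on ?pair (A \<times> B)"
    using assms(2) by (auto simp: inj_on_def doubleton_eq_iff)
  then have "card A * card B = card (?pair ` (A \<times> B))"
    by (simp add: card_image card_cartesian_product)
  also have "\<dots> \<le> card (nbhd 3 V E {x})"
  proof (rule card_mono)
    show "finite (nbhd 3 V E {x})"
      by (rule finite_subset[of _ "Pow V"]) (use assms(1) in \<open>auto simp: nbhd_def\<close>)
    show "?pair ` (A \<times> B) \<subseteq> nbhd 3 V E {x}"
    proof clarify
      fix y z assume "y \<in> A" "z \<in> B"
      moreover from this have "y \<noteq> z"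
        using assms(2) by blast
      ultimately show "{y, z} \<in> nbhd 3 V E {x}"
        using assms(3-5) by (auto simp: nbhd_def)
    qed
  qed
  finally show ?thesis
    unfolding deg_def .
qed

lemma le_min_deg_1I:
  assumes "finite V" "V \<noteq> {}" "\<And>x. x \<in> V \<Longrightarrow> d \<le> deg k V E {x}"
  shows "d \<le> min_deg k 1 V E"
proof -
  have "{S. S \<subseteq> V \<and> card S = 1} = (\<lambda>x. {x}) ` V"
    by (auto simp: card_1_singleton_iff)
  then show ?thesis
    using assms by (simp add: min_deg_def)
qed

lemma card_Un3_le: "card (A \<union> B \<union> C) \<le> card A + card B + card C"
  by (metis add_le_mono1 card_Un_le order_trans)

lemma card_triples_repeated_le:
  assumes "finite V"
  shows "card {(a, b, c). a \<in> V \<and> b \<in> V \<and> c \<in> V \<and> (a = b \<or> a = c \<or> b = c)}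
    \<le> 3 * card V ^ 2"
proof -
  have "{(a, b, c). a \<in> V \<and> b \<in> V \<and> c \<in> V \<and> (a = b \<or> a = c \<or> b = c)} =
      (\<lambda>(a, c). (a, a, c)) ` (V \<times> V) \<union> (\<lambda>(a, b). (a, b, a)) ` (V \<times> V) \<union>
      (\<lambda>(a, b). (a, b, b)) ` (V \<times> V)"
    by auto
  also have "card \<dots> \<le> card (V \<times> V) + card (V \<times> V) + card (V \<times> V)"
    by (rule order_trans[OF card_Un3_le]) (intro add_mono card_image_le; use assms in simp)
  finally show ?thesis
    by (simp add: card_cartesian_product power2_eq_square)
qed

lemma card_triples_meeting_le:
  assumes "T \<subseteq> V"
  shows "card {(a, b, c). a \<in> V \<and> b \<in> V \<and> c \<in> V \<and> (a \<in> T \<or> b \<in> T \<or> c \<in> T)}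
    \<le> 3 * card T * card V ^ 2"
proof -
  have "{(a, b, c). a \<in> V \<and> b \<in> V \<and> c \<in> V \<and> (a \<in> T \<or> b \<in> T \<or> c \<in> T)} =
      T \<times> V \<times> V \<union> V \<times> T \<times> V \<union> V \<times> V \<times> T"
    using assms by auto
  then show ?thesis
    using card_Un3_le[of "T \<times> V \<times> V" "V \<times> T \<times> V" "V \<times> V \<times> T"]
    by (simp add: card_cartesian_product power2_eq_square ac_simps)
qed

lemma card_triples_two_in_le:
  assumes "T \<subseteq> V"
  shows "card {(a, b, c). a \<in> V \<and> b \<in> V \<and> c \<in> V \<and>
      (a \<in> T \<and> b \<in> T \<or> a \<in> T \<and> c \<in> T \<or> b \<in> T \<and> c \<in> T)}
    \<le> 3 * card T ^ 2 * card V"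
proof -
  have "{(a, b, c). a \<in> V \<and> b \<in> V \<and> c \<in> V \<and>
      (a \<in> T \<and> b \<in> T \<or> a \<in> T \<and> c \<in> T \<or> b \<in> T \<and> c \<in> T)} =
      T \<times> T \<times> V \<union> T \<times> V \<times> T \<union> V \<times> T \<times> T"
    using assms by auto
  then show ?thesis
    using card_Un3_le[of "T \<times> T \<times> V" "T \<times> V \<times> T" "V \<times> T \<times> T"]
    by (simp add: card_cartesian_product power2_eq_square ac_simps)
qed

lemma pmu3_if_few_non_edges:
  assumes "kgraph 3 V E" "card V = n" "0 \<le> p" "p \<le> 1"
    and "real (card {(a, b, c). a \<in> V \<and> b \<in> V \<and> c \<in> V \<and> {a, b, c} \<notin> E}) \<le> \<mu> * real n ^ 3"
  shows "pmu3 n p \<mu> V E"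
  unfolding pmu3_def
proof (intro conjI allI impI)
  fix X1 X2 X3 assume X: "X1 \<subseteq> V" "X2 \<subseteq> V" "X3 \<subseteq> V"
  let ?G = "{(x1, x2, x3). x1 \<in> X1 \<and> x2 \<in> X2 \<and> x3 \<in> X3 \<and> {x1, x2, x3} \<in> E}"
  let ?B = "{(a, b, c). a \<in> V \<and> b \<in> V \<and> c \<in> V \<and> {a, b, c} \<notin> E}"
  have "finite V"
    using assms(1) by (simp add: kgraph_def)
  have "?G \<union> ?B \<subseteq> V \<times> V \<times> V"
    using X by auto
  then have "finite (?G \<union> ?B)"
    using \<open>finite V\<close> by (meson finite_SigmaI finite_subset)
  then have "card (X1 \<times> X2 \<times> X3) \<le> card (?G \<union> ?B)"
    by (rule card_mono) (use X in \<open>auto simp: subset_iff\<close>)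
  also have "\<dots> \<le> card ?G + card ?B"
    by (rule card_Un_le)
  finally have "card X1 * card X2 * card X3 \<le> card ?G + card ?B"
    by (simp add: card_cartesian_product mult.assoc)
  then have "real (card X1) * real (card X2) * real (card X3) \<le> real (card ?G) + real (card ?B)"
    by (simp only: of_nat_mult[symmetric] of_nat_add[symmetric] of_nat_le_iff)
  moreover have "p * real (card X1) * real (card X2) * real (card X3)
      \<le> real (card X1) * real (card X2) * real (card X3)"
    using assms(3,4) by (simp add: mult_left_le_one_le mult.assoc)
  ultimately show "p * real (card X1) * real (card X2) * real (card X3) - \<mu> * real n ^ 3 \<le> real (card ?G)"
    using assms(5) by linarith
qed (use assms in auto)

lemma le_mult_of_ceiling_divide_le:
  fixes c \<mu> :: real
  assumes "0 < \<mu>" "nat \<lceil>c / \<mu>\<rceil> \<le> n"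
  shows "c \<le> \<mu> * real n"
proof -
  have "c / \<mu> \<le> real n"
    using real_nat_ceiling_ge[of "c / \<mu>"] of_nat_mono[OF assms(2)] by (rule order_trans)
  then show ?thesis
    using assms(1) by (simp add: pos_divide_le_eq mult.commute)
qed

lemma ex_nat_gt_4_le_mult_square:
  fixes c \<mu> :: real
  assumes "0 < \<mu>"
  shows "\<exists>K::nat. 4 < K \<and> c \<le> \<mu> * real K ^ 2"
proof (intro exI conjI)
  let ?K = "nat \<lceil>c / \<mu>\<rceil> + 5"
  show "4 < ?K"
    by simp
  have "c \<le> \<mu> * real ?K"
    using assms by (rule le_mult_of_ceiling_divide_le) simp
  also have "\<dots> \<le> \<mu> * real ?K ^ 2"
    using assms le_square[of ?K] by (simp add: power2_eq_square flip: of_nat_mult)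
  finally show "c \<le> \<mu> * real ?K ^ 2" .
qed

definition blocking_edges :: "nat \<Rightarrow> nat \<Rightarrow> nat set set" where
  "blocking_edges n t = {e. e \<subseteq> {0..<n} \<and> card e = 3 \<and>
     (0 \<in> e \<longrightarrow> e \<subseteq> insert 0 {1..2*t}) \<and>
     (0 \<notin> e \<longrightarrow> (\<forall>y\<in>e \<inter> {1..2*t}. \<forall>z\<in>e \<inter> {1..2*t}. y = z))}"

lemma kgraph_blocking_edges: "kgraph 3 {0..<n} (blocking_edges n t)"
  unfolding kgraph_def blocking_edges_def by blast

lemma not_has_factor_blocking_edges:
  assumes "kgraph 3 VF EF"
    and "\<forall>v\<in>VF. \<exists>u\<in>VF - {v}. nbhd 3 VF EF {v} \<inter> nbhd 3 VF EF {u} \<noteq> {}"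
    and "0 < n"
  shows "\<not> has_factor VF EF {0..<n} (blocking_edges n t)"
proof (rule not_has_factor_if_uncovered)
  show "0 \<in> {0..<n}"
    using assms(3) by simp
  show "0 \<notin> \<phi> ` VF" if "embedding VF EF {0..<n} (blocking_edges n t) \<phi>" for \<phi>
    using assms(1,2) _ _ that by (rule embedding_avoids_hub[where S = "{1..2*t}"]) (auto simp: blocking_edges_def)
qed

lemma min_deg_blocking_edges:
  assumes "4 * t < n"
  shows "t * t \<le> min_deg 3 1 {0..<n} (blocking_edges n t)"
proof (rule le_min_deg_1I)
  fix x assume x: "x \<in> {0..<n}"
  consider "x = 0" | "x \<in> {1..2*t}" | "2 * t < x"
    by fastforce
  then show "t * t \<le> deg 3 {0..<n} (blocking_edges n t) {x}"
  proof cases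
    case 1
    have "card {1..t} * card {t+1..2*t} \<le> deg 3 {0..<n} (blocking_edges n t) {x}"
      by (rule card_mult_le_deg) (use assms 1 in \<open>auto simp: blocking_edges_def\<close>)
    then show ?thesis
      by simp
  next
    case 2
    have "card {2*t+1..3*t} * card {3*t+1..4*t} \<le> deg 3 {0..<n} (blocking_edges n t) {x}"
      by (rule card_mult_le_deg) (use assms 2 in \<open>auto simp: blocking_edges_def\<close>)
    then show ?thesis
      by simp
  next
    case 3
    define B where "B = (if x \<in> {2*t+1..3*t} then {3*t+1..4*t} else {2*t+1..3*t})"
    have "card {1..t} * card B \<le> deg 3 {0..<n} (blocking_edges n t) {x}"
      by (rule card_mult_le_deg)
        (use assms x 3 in \<open>auto simp: blocking_edges_def B_def split: if_splits\<close>)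
    moreover have "card B = t"
      by (simp add: B_def)
    ultimately show ?thesis
      by simp
  qed
qed (use assms in auto)

lemma min_deg_blocking_edges_div:
  assumes "4 < K" "K \<le> n"
  shows "real n ^ 2 / (4 * real K ^ 2) \<le> real (min_deg 3 1 {0..<n} (blocking_edges n (n div K)))"
proof -
  define t where "t = n div K"
  have "1 \<le> t"
    using assms by (simp add: t_def Suc_le_eq div_greater_zero_iff)
  have "n = t * K + n mod K"
    by (simp add: t_def)
  also have "\<dots> \<le> t * K + K"
    using assms by (simp add: less_imp_le)
  also have "\<dots> \<le> 2 * t * K"
    using \<open>1 \<le> t\<close> by simp
  finally have "real n \<le> 2 * real t * real K"
    by (metis of_nat_le_iff of_nat_mult of_nat_numeral)
  then have sq: "real n ^ 2 \<le> 4 * real K ^ 2 * (real t * real t)"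
    using power_mono[of "real n" "2 * real t * real K" 2] by (simp add: power2_eq_square algebra_simps)
  have "4 * t < K * t"
    using assms \<open>1 \<le> t\<close> by simp
  also have "\<dots> \<le> n"
    using div_times_less_eq_dividend[of n K] by (simp add: t_def mult.commute)
  finally have "t * t \<le> min_deg 3 1 {0..<n} (blocking_edges n t)"
    by (rule min_deg_blocking_edges)
  then have "real t * real t \<le> real (min_deg 3 1 {0..<n} (blocking_edges n t))"
    by (metis of_nat_le_iff of_nat_mult)
  moreover have "real n ^ 2 / (4 * real K ^ 2) \<le> real t * real t"
    using sq assms by (simp add: field_simps)
  ultimately show ?thesis
    unfolding t_def by linarith
qed

lemma card_non_edges_blocking_edges:
  assumes "2 * t < n"
  shows "card {(a, b, c). a \<in> {0..<n} \<and> b \<in> {0..<n} \<and> c \<in> {0..<n} \<and>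
      {a, b, c} \<notin> blocking_edges n t} \<le> 6 * n ^ 2 + 12 * t ^ 2 * n"
proof -
  let ?V = "{0..<n}" and ?S = "{1..2*t}"
  let ?rep = "{(a, b, c). a \<in> ?V \<and> b \<in> ?V \<and> c \<in> ?V \<and> (a = b \<or> a = c \<or> b = c)}"
  let ?hub = "{(a, b, c). a \<in> ?V \<and> b \<in> ?V \<and> c \<in> ?V \<and> (a \<in> {0} \<or> b \<in> {0} \<or> c \<in> {0})}"
  let ?two = "{(a, b, c). a \<in> ?V \<and> b \<in> ?V \<and> c \<in> ?V \<and>
      (a \<in> ?S \<and> b \<in> ?S \<or> a \<in> ?S \<and> c \<in> ?S \<or> b \<in> ?S \<and> c \<in> ?S)}"
  have sub: "?S \<subseteq> ?V" "{0} \<subseteq> ?V"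
    using assms by auto
  have edge: "{a, b, c} \<in> blocking_edges n t"
    if "{a, b, c} \<subseteq> ?V" "a \<noteq> b" "a \<noteq> c" "b \<noteq> c" "0 \<notin> {a, b, c}"
      and "\<not> (a \<in> ?S \<and> b \<in> ?S)" "\<not> (a \<in> ?S \<and> c \<in> ?S)" "\<not> (b \<in> ?S \<and> c \<in> ?S)"
    for a b c
    using that unfolding blocking_edges_def by auto
  have "{(a, b, c). a \<in> ?V \<and> b \<in> ?V \<and> c \<in> ?V \<and> {a, b, c} \<notin> blocking_edges n t}
      \<subseteq> ?rep \<union> ?hub \<union> ?two"
  proof
    fix w assume "w \<in> {(a, b, c). a \<in> ?V \<and> b \<in> ?V \<and> c \<in> ?V \<and> {a, b, c} \<notin> blocking_edges n t}"
    then obtain a b c where "w = (a, b, c)" "a \<in> ?V" "b \<in> ?V" "c \<in> ?V"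
      and "{a, b, c} \<notin> blocking_edges n t"
      by blast
    then show "w \<in> ?rep \<union> ?hub \<union> ?two"
      using edge[of a b c] by blast
  qed
  then have "card {(a, b, c). a \<in> ?V \<and> b \<in> ?V \<and> c \<in> ?V \<and> {a, b, c} \<notin> blocking_edges n t}
      \<le> card (?rep \<union> ?hub \<union> ?two)"
    by (rule card_mono[rotated]) (rule finite_subset[of _ "?V \<times> ?V \<times> ?V"]; auto)
  also have "\<dots> \<le> card ?rep + card ?hub + card ?two"
    by (rule card_Un3_le)
  also have "\<dots> \<le> 3 * n ^ 2 + 3 * 1 * n ^ 2 + 3 * (2 * t) ^ 2 * n"
    using card_triples_repeated_le[of ?V] card_triples_meeting_le[OF sub(2)]
      card_triples_two_in_le[OF sub(1)]
    by (intro add_mono) simp_all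
  finally show ?thesis
    by (simp add: power2_eq_square)
qed

lemma pmu3_blocking_edges:
  assumes "0 \<le> p" "p \<le> 1" "2 < K" "24 \<le> \<mu> * real K ^ 2" "12 \<le> \<mu> * real n"
  shows "pmu3 n p \<mu> {0..<n} (blocking_edges n (n div K))"
proof (rule pmu3_if_few_non_edges)
  define t where "t = n div K"
  have "0 < \<mu> * real n"
    using assms(5) by linarith
  then have "0 < \<mu>" "0 < n"
    by (auto simp: zero_less_mult_iff)
  have "K * t \<le> n"
    using div_times_less_eq_dividend[of n K] by (simp add: t_def mult.commute)
  then have Kt: "real K * real t \<le> real n"
    by (metis of_nat_le_iff of_nat_mult)
  have "2 * t < K * t \<or> t = 0"
    using assms(3) by auto
  then have "2 * t < n"
    using \<open>K * t \<le> n\<close> \<open>0 < n\<close> by linarith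
  then have "card {(a, b, c). a \<in> {0..<n} \<and> b \<in> {0..<n} \<and> c \<in> {0..<n} \<and>
      {a, b, c} \<notin> blocking_edges n t} \<le> 6 * n ^ 2 + 12 * t ^ 2 * n"
    by (rule card_non_edges_blocking_edges)
  then have "real (card {(a, b, c). a \<in> {0..<n} \<and> b \<in> {0..<n} \<and> c \<in> {0..<n} \<and>
      {a, b, c} \<notin> blocking_edges n t}) \<le> 6 * real n ^ 2 + 12 * (real t ^ 2 * real n)"
    by (simp only: of_nat_le_iff[symmetric, where 'a = real] of_nat_add of_nat_mult of_nat_power
        of_nat_numeral mult.assoc)
  moreover have "6 * real n ^ 2 \<le> \<mu> * real n ^ 3 / 2"
    using mult_right_mono[OF assms(5), of "real n ^ 2"] by (simp add: power2_eq_square power3_eq_cube)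
  moreover have "24 * (real t ^ 2 * real n) \<le> \<mu> * real n ^ 3"
  proof -
    have "24 * (real t ^ 2 * real n) \<le> \<mu> * real K ^ 2 * (real t ^ 2 * real n)"
      using assms(4) by (intro mult_right_mono) auto
    also have "\<dots> = \<mu> * real n * (real K * real t) ^ 2"
      by (simp add: power2_eq_square)
    also have "\<dots> \<le> \<mu> * real n * real n ^ 2"
      using Kt \<open>0 < \<mu>\<close> by (intro mult_left_mono power_mono) auto
    finally show ?thesis
      by (simp add: power2_eq_square power3_eq_cube)
  qed
  ultimately show "real (card {(a, b, c). a \<in> {0..<n} \<and> b \<in> {0..<n} \<and> c \<in> {0..<n} \<and>
      {a, b, c} \<notin> blocking_edges n (n div K)}) \<le> \<mu> * real n ^ 3"
    unfolding t_def[symmetric] by linarith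
qed (use assms kgraph_blocking_edges in auto)

theorem mainTheorem1:
  fixes VF :: "'a set" and EF :: "'a set set"
  assumes "kgraph 3 VF EF"
    and "\<forall>v\<in>VF. \<exists>u\<in>VF - {v}. nbhd 3 VF EF {v} \<inter> nbhd 3 VF EF {u} \<noteq> {}"
  shows "\<forall>p \<mu>. 0 < p \<and> p < 1 \<and> 0 < \<mu> \<longrightarrow>
     (\<exists>(n0::nat) (\<alpha>::real). \<alpha> > 0 \<and>
        (\<forall>n\<ge>n0. \<exists>(V::nat set) E. pmu3 n p \<mu> V E \<and>
            real (min_deg 3 1 V E) \<ge> \<alpha> * real n ^ 2 \<and>
            \<not> has_factor VF EF V E))"
proof (intro allI impI)
  fix p \<mu> :: real
  assume "0 < p \<and> p < 1 \<and> 0 < \<mu>"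
  then have p: "0 \<le> p" "p \<le> 1" and "0 < \<mu>"
    by auto
  then obtain K :: nat where K: "4 < K" "24 \<le> \<mu> * real K ^ 2"
    using ex_nat_gt_4_le_mult_square by blast
  show "\<exists>(n0::nat) (\<alpha>::real). \<alpha> > 0 \<and>
        (\<forall>n\<ge>n0. \<exists>(V::nat set) E. pmu3 n p \<mu> V E \<and>
            real (min_deg 3 1 V E) \<ge> \<alpha> * real n ^ 2 \<and> \<not> has_factor VF EF V E)"
  proof (intro exI[of _ "K + nat \<lceil>12 / \<mu>\<rceil>"] exI[of _ "1 / (4 * real K ^ 2)"] conjI allI impI)
    show "0 < 1 / (4 * real K ^ 2)"
      using K by simp
    fix n assume "K + nat \<lceil>12 / \<mu>\<rceil> \<le> n"
    then have n: "K \<le> n" "12 \<le> \<mu> * real n"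
      using le_mult_of_ceiling_divide_le[OF \<open>0 < \<mu>\<close>, of 12 n] by linarith+
    show "\<exists>(V::nat set) E. pmu3 n p \<mu> V E \<and>
        1 / (4 * real K ^ 2) * real n ^ 2 \<le> real (min_deg 3 1 V E) \<and> \<not> has_factor VF EF V E"
    proof (intro exI conjI)
      show "pmu3 n p \<mu> {0..<n} (blocking_edges n (n div K))"
        using K(1) by (intro pmu3_blocking_edges p K(2) n(2)) simp
      show "1 / (4 * real K ^ 2) * real n ^ 2 \<le> real (min_deg 3 1 {0..<n} (blocking_edges n (n div K)))"
        using min_deg_blocking_edges_div[OF K(1) n(1)] by simp
      show "\<not> has_factor VF EF {0..<n} (blocking_edges n (n div K))"
        using K(1) n(1) by (intro not_has_factor_blocking_edges assms) simp
    qed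
  qed
qed

end
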